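(* Let $n\ge2$, $(a,b)\in\Omega_n$, and $L=L^{(n)}_{(a,b)}$. Then $H_L=\langle\omega^{2ab}\rangle$, the cyclic group $C_{n/ab}$ of order $n/(ab)$, so the base group for $L$ is $G=G_{\mathcal{D}_n}(L^{(n)}_{(a,b)},C_{n/ab})$, and $$|G|=\frac{8n^2}{ab},\qquad G \text{ has } \frac{2n}{ab}+\frac{2n}{a}+\frac{2n}{b}-2 \text{ reflections}.$$ Moreover, the base groups obtained for different $(a,b)\in\Omega_n$ are all different.
   Context: $\mathbb{H}$ is the real quaternion algebra with basis $1,i,j,k$. For $n\ge2$ let $\omega:=\cos(\pi/n)+i\sin(\pi/n)\in\mathbb{H}$ and $\mathcal{D}_n:=\langle\omega,j\rangle$ (dicyclic group of order $4n$); for $r\mid 2n$, $C_r:=\langle\omega^{2n/r}\rangle$. $\Omega_n:=\{(a,b):1\le a\le b\le n,\ a\mid n,\ b\mid n,\ \gcd(a,b)=1\}$. For $x,y$ in a group put $x\circ y:=xy^{-1}x$, and let $L(X)$ be the closure of a set $X$ under $\circ$; $L^{(n)}_{(a,b)}:=L(\{1,\omega^a,j,\omega^bj\})$ (a reflection system for $\mathcal{D}_n$, i.e. a subset generating $\mathcal{D}_n$, closed under $\circ$ and containing $1$). For $b\in\mathcal{D}_n$ let $M_b=\begin{pmatrix}0&b\\ b^{-1}&0\end{pmatrix}$. For a reflection system $L$, $H_L:=\{h:\mathrm{diag}(h,1)\in\langle M_b:b\in L\rangle\}$. For $H\trianglelefteq K$ with $H\subseteq L$, $LH=L$, $G(K,L,H)$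 is the subgroup of $U(\mathbb{H}^2)$ generated by $\mathrm{diag}(h,1),\mathrm{diag}(1,h)$ ($h\in H$) and $M_b$ ($b\in L$); it is in canonical form, denoted $G_K(L,H)$, if $\{b: M_b\in G(K,L,H)\}=L$. The base group for $L$ is $G_K(L,H_L)$. A reflection is a non-identity $g\in U(\mathbb{H}^2)$ with $\operatorname{rank}(g-I)=1$. *)

theory Defs
  imports "HOL-Analysis.Analysis"
begin

datatype quat = Quat (qre: real) (qi: real) (qj: real) (qk: real)

lemma quat_eq_iff: "x = y \<longleftrightarrow> qre x = qre y \<and> qi x = qi y \<and> qj x = qj y \<and> qk x = qk y"
  by (cases x; cases y) auto

instantiation quat :: ring_1
begin
definition "0 = Quat 0 0 0 0"
definition "1 = Quat 1 0 0 0"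
definition "x + y = Quat (qre x + qre y) (qi x + qi y) (qj x + qj y) (qk x + qk y)"
definition "x - y = Quat (qre x - qre y) (qi x - qi y) (qj x - qj y) (qk x - qk y)"
definition "- x = Quat (- qre x) (- qi x) (- qj x) (- qk x)"
definition "x * y = Quat
   (qre x * qre y - qi x * qi y - qj x * qj y - qk x * qk y)
   (qre x * qi y + qi x * qre y + qj x * qk y - qk x * qj y)
   (qre x * qj y - qi x * qk y + qj x * qre y + qk x * qi y)
   (qre x * qk y + qi x * qj y - qj x * qi y + qk x * qre y)"
instance
  by standard (auto simp: quat_eq_iff zero_quat_def one_quat_def plus_quat_def minus_quat_def
      uminus_quat_def times_quat_def algebra_simps)
end

definition qnormsq :: "quat \<Rightarrow> real" where
  "qnormsq x = qre x ^ 2 + qi x ^ 2 + qj x ^ 2 + qk x ^ 2"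

definition qcnj :: "quat \<Rightarrow> quat" where
  "qcnj x = Quat (qre x) (- qi x) (- qj x) (- qk x)"

lemma qnormsq_pos: "x \<noteq> 0 \<Longrightarrow> qnormsq x > 0"
proof -
  assume "x \<noteq> 0"
  then have "qre x \<noteq> 0 \<or> qi x \<noteq> 0 \<or> qj x \<noteq> 0 \<or> qk x \<noteq> 0"
    by (auto simp: quat_eq_iff zero_quat_def)
  then show ?thesis unfolding qnormsq_def
    by (smt (verit) zero_le_power2 power2_less_0 not_sum_power2_lt_zero sum_power2_gt_zero_iff)
qed

instantiation quat :: division_ring
begin
definition inverse_quat :: "quat \<Rightarrow> quat" where "inverse_quat x = Quat (qre x / qnormsq x) (- qi x / qnormsq x) (- qj x / qnormsq x) (- qk x / qnormsq x)"
definition divide_quat :: "quat \<Rightarrow> quat \<Rightarrow> quat" where "divide_quat x y = x * inverse y"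
instance
proof
  fix a :: quat assume "a \<noteq> 0"
  then have p: "qnormsq a \<noteq> 0" using qnormsq_pos by force
  show "inverse a * a = 1" "a * inverse a = 1"
    using p by (auto simp: quat_eq_iff times_quat_def inverse_quat_def one_quat_def
        divide_simps, (simp add: qnormsq_def power2_eq_square algebra_simps)+)
next
  fix a b :: quat show "divide a b = a * inverse b" by (simp add: divide_quat_def inverse_quat_def)
next
  show "inverse (0::quat) = 0"
    by (simp add: inverse_quat_def zero_quat_def qnormsq_def)
qed
end

definition qI :: quat where "qI = Quat 0 1 0 0"
definition qJ :: quat where "qJ = Quat 0 0 1 0"

definition omega :: "nat \<Rightarrow> quat" where
  "omega n = Quat (cos (pi / real n)) (sin (pi / real n)) 0 0"

inductive_set qgen :: "quat set \<Rightarrow> quat set" for S where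
  one: "1 \<in> qgen S"
| mul: "x \<in> qgen S \<Longrightarrow> s \<in> S \<Longrightarrow> x * s \<in> qgen S"
| mulinv: "x \<in> qgen S \<Longrightarrow> s \<in> S \<Longrightarrow> x * inverse s \<in> qgen S"

definition Dic :: "nat \<Rightarrow> quat set" where
  "Dic n = qgen {omega n, qJ}"

text \<open>C_r = <omega^(2n/r)> for r dividing 2n.\<close>
definition Cyc :: "nat \<Rightarrow> nat \<Rightarrow> quat set" where
  "Cyc n r = qgen {omega n ^ (2 * n div r)}"

definition Omega :: "nat \<Rightarrow> (nat \<times> nat) set" where
  "Omega n = {(a, b). 1 \<le> a \<and> a \<le> b \<and> b \<le> n \<and> a dvd n \<and> b dvd n \<and> coprime a b}"

definition qcirc :: "quat \<Rightarrow> quat \<Rightarrow> quat" where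
  "qcirc x y = x * inverse y * x"

inductive_set Lcl :: "quat set \<Rightarrow> quat set" for X where
  base: "x \<in> X \<Longrightarrow> x \<in> Lcl X"
| circ: "x \<in> Lcl X \<Longrightarrow> y \<in> Lcl X \<Longrightarrow> qcirc x y \<in> Lcl X"

definition Lsys :: "nat \<Rightarrow> nat \<Rightarrow> nat \<Rightarrow> quat set" where
  "Lsys n a b = Lcl {1, omega n ^ a, qJ, omega n ^ b * qJ}"

type_synonym qmat = "quat ^ 2 ^ 2"

definition mat2 :: "quat \<Rightarrow> quat \<Rightarrow> quat \<Rightarrow> quat \<Rightarrow> qmat" where
  "mat2 p q r s = vector [vector [p, q], vector [r, s]]"

definition Mb :: "quat \<Rightarrow> qmat" where
  "Mb b = mat2 0 b (inverse b) 0"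

definition qdiag :: "quat \<Rightarrow> quat \<Rightarrow> qmat" where
  "qdiag h k = mat2 h 0 0 k"

text \<open>Conjugate transpose; on U(H^2) this is the group inverse.\<close>
definition qadj :: "qmat \<Rightarrow> qmat" where
  "qadj A = (\<chi> i j. qcnj (A $ j $ i))"

definition unitary :: "qmat \<Rightarrow> bool" where
  "unitary A \<longleftrightarrow> qadj A ** A = mat 1 \<and> A ** qadj A = mat 1"

text \<open>Subgroup of U(H^2) generated by a set S of unitary matrices
  (the inverse of a unitary matrix is its conjugate transpose).\<close>
inductive_set mgen :: "qmat set \<Rightarrow> qmat set" for S where
  one: "mat 1 \<in> mgen S"
| mul: "g \<in> mgen S \<Longrightarrow> s \<in> S \<Longrightarrow> g ** s \<in> mgen S"
| mulinv: "g \<in> mgen S \<Longrightarrow> s \<in> S \<Longrightarrow> g ** qadj s \<in> mgen S"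

definition HL :: "quat set \<Rightarrow> quat set" where
  "HL L = {h. qdiag h 1 \<in> mgen (Mb ` L)}"

text \<open>G(K,L,H) (the group does not depend on K)\<close>
definition Ggrp :: "quat set \<Rightarrow> quat set \<Rightarrow> qmat set" where
  "Ggrp L H = mgen ((\<lambda>h. qdiag h 1) ` H \<union> (\<lambda>h. qdiag 1 h) ` H \<union> Mb ` L)"

definition canonical :: "quat set \<Rightarrow> quat set \<Rightarrow> bool" where
  "canonical L H \<longleftrightarrow> {b. Mb b \<in> Ggrp L H} = L"

definition base_group :: "quat set \<Rightarrow> qmat set" where
  "base_group L = Ggrp L (HL L)"

text \<open>Rank of a 2x2 quaternionic matrix (H^2 as a right H-module): the maximal number
  of right-linearly independent columns.\<close>
definition qrank :: "qmat \<Rightarrow> nat" where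
  "qrank A = (if A = 0 then 0
              else if (\<exists>v :: quat ^ 2. v \<noteq> 0 \<and> A *v v = 0) then 1 else 2)"

definition is_reflection :: "qmat \<Rightarrow> bool" where
  "is_reflection g \<longleftrightarrow> unitary g \<and> g \<noteq> mat 1 \<and> qrank (g - mat 1) = 1"

end

theory Submission
  imports Defs
begin

(* Every element of the dicyclic group is omega^u j^e, with u taken mod 2n.  In these coordinates
   the reflection system is L = {omega^(ka)} \<union> {omega^(kb) j}, and the group generated by the
   M_c (c \<in> L) consists of the monomial matrices diag(p, q) and antidiag(p, q) whose entries
   p = omega^u j^e, q = omega^v j^e satisfy u + v = e n (mod 2b) and u - v = e n (mod 2a): these
   congruences survive products and inverses, and conversely all such matrices are products of
   M_(omega^a) M_1, M_(omega^b j) M_j and M_1 M_j.  Taking q = 1, the congruences say that p is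
   a power of omega^(2 lcm(a,b)), which gives H_L; hence the base group is this monomial group,
   and counting solutions of the congruences gives |G| = 8 (n/a)(n/b).  Its reflections are
   diag(h, 1), diag(1, h) for h \<in> H_L - {1} and the M_c for c \<in> L.  Finally a and b can be read
   off G, since diag(omega^c, omega^-c) \<in> G iff a divides c and diag(omega^c, omega^c) \<in> G iff
   b divides c. *)

section \<open>Monomial 2x2 quaternion matrices\<close>

definition antidiag :: "quat \<Rightarrow> quat \<Rightarrow> qmat" where
  "antidiag p q = mat2 0 p q 0"

lemma mat2_eq_iff: "mat2 p q r s = mat2 p' q' r' s' \<longleftrightarrow> p = p' \<and> q = q' \<and> r = r' \<and> s = s'"
  by (auto simp: mat2_def vec_eq_iff forall_2)

lemma mat2_nth [simp]:
  "mat2 p q r s $ 1 $ 1 = p" "mat2 p q r s $ 1 $ 2 = q"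
  "mat2 p q r s $ 2 $ 1 = r" "mat2 p q r s $ 2 $ 2 = s"
  by (simp_all add: mat2_def)

lemma mat2_mult_mat2: "mat2 p q r s ** mat2 p' q' r' s' =
    mat2 (p * p' + q * r') (p * q' + q * s') (r * p' + s * r') (r * q' + s * s')"
  by (simp add: vec_eq_iff forall_2 matrix_matrix_mult_def sum_2)

lemma mat2_mult_vec: "mat2 p q r s *v v = vector [p * v $ 1 + q * v $ 2, r * v $ 1 + s * v $ 2]"
  by (simp add: vec_eq_iff forall_2 matrix_vector_mult_def sum_2)

lemma qadj_mat2: "qadj (mat2 p q r s) = mat2 (qcnj p) (qcnj r) (qcnj q) (qcnj s)"
  by (simp add: vec_eq_iff forall_2 qadj_def)

lemma mat2_diff: "mat2 p q r s - mat2 p' q' r' s' = mat2 (p - p') (q - q') (r - r') (s - s')"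
  by (simp add: vec_eq_iff forall_2)

lemma mat2_eq_0_iff: "mat2 p q r s = 0 \<longleftrightarrow> p = 0 \<and> q = 0 \<and> r = 0 \<and> s = 0"
  by (auto simp: vec_eq_iff forall_2)

lemma vec2_eq_0_iff: "(v :: quat ^ 2) = 0 \<longleftrightarrow> v $ 1 = 0 \<and> v $ 2 = 0"
  by (auto simp: vec_eq_iff forall_2)

lemma mat_1_eq_qdiag: "mat 1 = qdiag 1 1"
  by (simp add: vec_eq_iff forall_2 mat_def qdiag_def)

lemma Mb_eq_antidiag: "Mb c = antidiag c (inverse c)"
  by (simp add: Mb_def antidiag_def)

lemma qdiag_mult_qdiag: "qdiag p q ** qdiag p' q' = qdiag (p * p') (q * q')"
  and qdiag_mult_antidiag: "qdiag p q ** antidiag p' q' = antidiag (p * p') (q * q')"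
  and antidiag_mult_qdiag: "antidiag p q ** qdiag p' q' = antidiag (p * q') (q * p')"
  and antidiag_mult_antidiag: "antidiag p q ** antidiag p' q' = qdiag (p * q') (q * p')"
  by (simp_all add: qdiag_def antidiag_def mat2_mult_mat2)

lemma qadj_qdiag: "qadj (qdiag p q) = qdiag (qcnj p) (qcnj q)"
  and qadj_antidiag: "qadj (antidiag p q) = antidiag (qcnj q) (qcnj p)"
  by (simp_all add: qdiag_def antidiag_def qadj_mat2 qcnj_def zero_quat_def)

lemma qdiag_eq_iff: "qdiag p q = qdiag p' q' \<longleftrightarrow> p = p' \<and> q = q'"
  and antidiag_eq_iff: "antidiag p q = antidiag p' q' \<longleftrightarrow> p = p' \<and> q = q'"
  and qdiag_eq_antidiag_iff: "qdiag p q = antidiag p' q' \<longleftrightarrow> p = 0 \<and> q = 0 \<and> p' = 0 \<and> q' = 0"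
  and antidiag_eq_qdiag_iff: "antidiag p' q' = qdiag p q \<longleftrightarrow> p = 0 \<and> q = 0 \<and> p' = 0 \<and> q' = 0"
  by (auto simp: qdiag_def antidiag_def mat2_eq_iff)

lemma qcnj_mult_self_commute: "qcnj p * p = p * qcnj p"
  by (simp add: quat_eq_iff qcnj_def times_quat_def)

lemma unitary_qdiag: "qcnj p * p = 1 \<Longrightarrow> qcnj q * q = 1 \<Longrightarrow> unitary (qdiag p q)"
  and unitary_antidiag: "qcnj p * p = 1 \<Longrightarrow> qcnj q * q = 1 \<Longrightarrow> unitary (antidiag p q)"
  by (simp_all add: unitary_def mat_1_eq_qdiag qadj_qdiag qadj_antidiag qdiag_mult_qdiag
      antidiag_mult_antidiag qcnj_mult_self_commute)

lemma qrank_qdiag_eq_1_iff: "qrank (qdiag p q) = 1 \<longleftrightarrow> (p = 0 \<longleftrightarrow> q \<noteq> 0)"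
proof -
  have kernel: "(\<exists>v :: quat ^ 2. v \<noteq> 0 \<and> qdiag p q *v v = 0) \<longleftrightarrow> p = 0 \<or> q = 0"
  proof
    assume "\<exists>v :: quat ^ 2. v \<noteq> 0 \<and> qdiag p q *v v = 0"
    then show "p = 0 \<or> q = 0" by (auto simp: qdiag_def mat2_mult_vec vec2_eq_0_iff)
  next
    assume "p = 0 \<or> q = 0"
    then have "qdiag p q *v vector [1, 0] = 0 \<or> qdiag p q *v vector [0, 1] = 0"
      by (auto simp: qdiag_def mat2_mult_vec vec2_eq_0_iff)
    then show "\<exists>v :: quat ^ 2. v \<noteq> 0 \<and> qdiag p q *v v = 0"
      by (metis vec2_eq_0_iff vector_1 vector_2 zero_neq_one)
  qed
  show ?thesis
    using kernel by (auto simp: qrank_def qdiag_def mat2_eq_0_iff)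
qed

lemma qrank_antidiag_minus_1_eq_1_iff: "qrank (antidiag p q - mat 1) = 1 \<longleftrightarrow> q * p = 1"
proof -
  have shifted: "antidiag p q - mat 1 = mat2 (- 1) p q (- 1)"
    by (simp add: antidiag_def mat_1_eq_qdiag qdiag_def mat2_diff)
  have kernel: "(\<exists>v :: quat ^ 2. v \<noteq> 0 \<and> mat2 (- 1) p q (- 1) *v v = 0) \<longleftrightarrow> q * p = 1"
  proof
    assume "\<exists>v :: quat ^ 2. v \<noteq> 0 \<and> mat2 (- 1) p q (- 1) *v v = 0"
    then obtain v :: "quat ^ 2" where v: "v \<noteq> 0" "mat2 (- 1) p q (- 1) *v v = 0" by blast
    then have v1: "v $ 1 = p * v $ 2" and v2: "v $ 2 = q * v $ 1"
      by (auto simp: mat2_mult_vec vec2_eq_0_iff)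
    then have "(q * p - 1) * v $ 2 = 0" by (simp add: algebra_simps mult.assoc)
    moreover have "v $ 2 \<noteq> 0" using v(1) v1 by (auto simp: vec2_eq_0_iff)
    ultimately show "q * p = 1" by simp
  next
    assume "q * p = 1"
    then show "\<exists>v :: quat ^ 2. v \<noteq> 0 \<and> mat2 (- 1) p q (- 1) *v v = 0"
      by (intro exI[of _ "vector [p, 1]"]) (simp add: mat2_mult_vec vec2_eq_0_iff)
  qed
  show ?thesis
    using kernel by (simp add: shifted qrank_def mat2_eq_0_iff)
qed

lemma is_reflection_qdiag:
  assumes "unitary (qdiag p q)"
  shows "is_reflection (qdiag p q) \<longleftrightarrow> (p = 1 \<longleftrightarrow> q \<noteq> 1)"
proof -
  have "qdiag p q - mat 1 = qdiag (p - 1) (q - 1)"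
    by (simp add: mat_1_eq_qdiag qdiag_def mat2_diff)
  then show ?thesis
    using assms qrank_qdiag_eq_1_iff[of "p - 1" "q - 1"]
    by (auto simp: is_reflection_def mat_1_eq_qdiag qdiag_eq_iff)
qed

lemma is_reflection_antidiag:
  assumes "unitary (antidiag p q)"
  shows "is_reflection (antidiag p q) \<longleftrightarrow> q * p = 1"
proof -
  have "antidiag p q \<noteq> mat 1"
    using qdiag_eq_antidiag_iff[of 1 1 p q] by (auto simp: mat_1_eq_qdiag)
  then show ?thesis
    using assms qrank_antidiag_minus_1_eq_1_iff[of p q] by (simp add: is_reflection_def)
qed

lemma mgen_mult_closed:
  assumes "g \<in> mgen S" "h \<in> mgen S" shows "g ** h \<in> mgen S"
  using assms(2,1)
proof (induction h rule: mgen.induct)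
  case (mul h s) then show ?case using mgen.mul[of "g ** h" S s] by (simp add: matrix_mul_assoc)
next
  case (mulinv h s) then show ?case using mgen.mulinv[of "g ** h" S s] by (simp add: matrix_mul_assoc)
qed simp

lemma mgen_generator: "s \<in> S \<Longrightarrow> s \<in> mgen S"
  using mgen.mul[OF mgen.one, of s S] by simp

lemma mgen_mono: assumes "S \<subseteq> T" shows "mgen S \<subseteq> mgen T"
proof
  fix g assume "g \<in> mgen S"
  then show "g \<in> mgen T" by induction (use assms in \<open>auto intro: mgen.intros\<close>)
qed

lemma mgen_least:
  assumes "mat 1 \<in> G" "\<And>g s. g \<in> G \<Longrightarrow> s \<in> S \<Longrightarrow> g ** s \<in> G"
    "\<And>g s. g \<in> G \<Longrightarrow> s \<in> S \<Longrightarrow> g ** qadj s \<in> G"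
  shows "mgen S \<subseteq> G"
proof
  fix g assume "g \<in> mgen S" then show "g \<in> G" by induction (use assms in auto)
qed

lemma qgen_singleton: assumes "g \<noteq> 0" shows "qgen {g} = range (\<lambda>k. g powi k)"
proof
  show "qgen {g} \<subseteq> range (\<lambda>k. g powi k)"
  proof
    fix x assume "x \<in> qgen {g}"
    then show "x \<in> range (\<lambda>k. g powi k)"
    proof induction
      case one then show ?case by (metis power_int_0_right rangeI)
    next
      case (mul x s)
      then obtain k where "x = g powi k" by blast
      then have "x * s = g powi (k + 1)" using mul assms by (simp add: power_int_add)
      then show ?case by blast
    next
      case (mulinv x s)
      then obtain k where "x = g powi k" by blast
      then have "x * inverse s = g powi (k - 1)" using mulinv assms power_int_add[of g k "- 1"] by simp
      then show ?case by blast
    qed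
  qed
  have pow: "g ^ m \<in> qgen {g}" and inverse_pow: "inverse g ^ m \<in> qgen {g}" for m
    by (induction m) (auto simp: power_Suc2 simp del: power_Suc intro: qgen.intros)
  show "range (\<lambda>k. g powi k) \<subseteq> qgen {g}"
    using pow inverse_pow by (auto simp: power_int_def)
qed

section \<open>Integer powers of omega and the dicyclic group\<close>

lemma omega_power:
  "omega n ^ m = Quat (cos (real m * pi / real n)) (sin (real m * pi / real n)) 0 0"
proof (induction m)
  case (Suc m)
  have "real (Suc m) * pi / real n = pi / real n + real m * pi / real n"
    by (simp add: add_divide_distrib distrib_right)
  then show ?case
    using Suc by (simp add: omega_def times_quat_def cos_add sin_add)
qed (simp add: one_quat_def)

lemma inverse_unit_complex_quat: "inverse (Quat (cos t) (sin t) 0 0) = Quat (cos (- t)) (sin (- t)) 0 0"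
  by (simp add: inverse_quat_def qnormsq_def)

lemma omega_powi:
  "omega n powi u = Quat (cos (of_int u * pi / real n)) (sin (of_int u * pi / real n)) 0 0"
proof (cases u rule: int_cases4)
  case (neg m)
  then have "omega n powi u = inverse (omega n ^ m)"
    by (simp add: power_int_def power_inverse)
  then show ?thesis
    using neg by (simp add: omega_power inverse_unit_complex_quat)
qed (simp add: omega_power)

lemma cos_eq_0_imp_sin_neq_0: "cos (t :: real) = 0 \<Longrightarrow> sin t \<noteq> 0"
  using sin_cos_squared_add[of t] by (metis add_0 power_zero_numeral zero_neq_one)

lemma omega_nonzero: "omega n \<noteq> 0"
  using cos_eq_0_imp_sin_neq_0 by (auto simp: omega_def zero_quat_def)

lemma mult_omega_powi: "omega n powi u * omega n powi v = omega n powi (u + v)"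
  by (simp add: power_int_add omega_nonzero)

lemma omega_powi_eq_1_iff: assumes "n > 0" shows "omega n powi u = 1 \<longleftrightarrow> 2 * int n dvd u"
proof
  assume "omega n powi u = 1"
  then obtain k :: int where "of_int u * pi / real n = of_int k * 2 * pi"
    by (auto simp: omega_powi one_quat_def cos_one_2pi_int)
  then have "real_of_int u = real_of_int (k * 2 * int n)"
    using assms by (simp add: field_simps)
  then show "2 * int n dvd u" by (metis dvd_triv_right mult.assoc mult.commute of_int_eq_iff)
next
  assume "2 * int n dvd u"
  then obtain k where "u = 2 * int n * k" by blast
  then have "of_int u * pi / real n = 2 * pi * of_int k" using assms by (simp add: field_simps)
  then show "omega n powi u = 1"
    by (simp add: omega_powi one_quat_def cos_int_2pin sin_int_2pin)
qed

lemma omega_powi_eq_iff: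
  assumes "n > 0" shows "omega n powi u = omega n powi v \<longleftrightarrow> 2 * int n dvd u - v"
proof -
  have "omega n powi u = omega n powi v \<longleftrightarrow> omega n powi u * omega n powi (- v) = 1"
    by (metis add.right_inverse mult_omega_powi mult_1_left power_int_0_right add_0 add.commute
        mult.assoc add_minus_cancel)
  then show ?thesis using omega_powi_eq_1_iff[OF assms] by (simp add: mult_omega_powi)
qed

lemma omega_powi_n: "n > 0 \<Longrightarrow> omega n powi int n = - 1"
  by (simp add: omega_power one_quat_def uminus_quat_def)

lemma qJ_mult_omega_powi: "qJ * omega n powi u = omega n powi (- u) * qJ"
  by (simp add: omega_powi qJ_def times_quat_def)

lemma qJ_mult_qJ: "qJ * qJ = - 1"
  by (simp add: qJ_def times_quat_def one_quat_def uminus_quat_def)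

lemma omega_powi_mult_qJ_neq: "omega n powi u * qJ \<noteq> omega n powi v"
  using cos_eq_0_imp_sin_neq_0 by (auto simp: omega_powi qJ_def times_quat_def quat_eq_iff)

lemma qcnj_omega_powi: "qcnj (omega n powi u) = omega n powi (- u)"
  and qcnj_omega_powi_mult_qJ: "qcnj (omega n powi u * qJ) = - (omega n powi u * qJ)"
  by (simp_all add: omega_powi qcnj_def qJ_def times_quat_def uminus_quat_def)

definition dic :: "nat \<Rightarrow> int \<Rightarrow> bool \<Rightarrow> quat" where
  "dic n u e = (if e then omega n powi u * qJ else omega n powi u)"

lemma dic_False: "dic n u False = omega n powi u"
  by (simp add: dic_def)

lemma dic_0_False: "dic n 0 False = 1"
  and dic_0_True: "dic n 0 True = qJ"
  by (simp_all add: dic_def)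

lemma qJ_nonzero: "qJ \<noteq> 0"
  by (simp add: qJ_def zero_quat_def)

lemma dic_nonzero: "dic n u e \<noteq> 0"
  by (simp add: dic_def omega_nonzero qJ_nonzero)

lemma dic_mult:
  assumes "n > 0"
  shows "dic n u e * dic n v f = dic n (if e then u - v + (if f then int n else 0) else u + v) (e \<noteq> f)"
proof -
  have swap: "omega n powi u * qJ * omega n powi v = omega n powi (u - v) * qJ"
    by (simp add: mult.assoc qJ_mult_omega_powi) (simp flip: mult.assoc add: mult_omega_powi)
  have "omega n powi u * qJ * (omega n powi v * qJ) = omega n powi (u - v) * (qJ * qJ)"
    by (metis swap mult.assoc)
  also have "\<dots> = omega n powi (u - v + int n)"
    by (simp add: qJ_mult_qJ flip: omega_powi_n[OF assms] mult_omega_powi)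
  finally show ?thesis
    using swap by (cases e; cases f) (simp_all add: dic_def mult_omega_powi flip: mult.assoc)
qed

lemma dic_eq_iff:
  assumes "n > 0" shows "dic n u e = dic n v f \<longleftrightarrow> e = f \<and> 2 * int n dvd u - v"
  using omega_powi_mult_qJ_neq omega_powi_mult_qJ_neq[symmetric] omega_powi_eq_iff[OF assms]
  by (cases e; cases f) (auto simp: dic_def qJ_nonzero)

lemma dic_mult_mod: assumes "n > 0" shows "dic n (c * (k mod (2 * int n))) e = dic n (c * k) e"
proof -
  have "c * k - c * (k mod (2 * int n)) = 2 * int n * (c * (k div (2 * int n)))"
    by (metis minus_mod_eq_mult_div right_diff_distrib mult.left_commute)
  then have "2 * int n dvd c * (k mod (2 * int n)) - c * k"
    by (metis dvd_minus_iff dvd_triv_left minus_diff_eq)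
  then show ?thesis by (simp add: dic_eq_iff[OF assms])
qed

lemma inverse_dic: "n > 0 \<Longrightarrow> inverse (dic n u e) = dic n (if e then u + int n else - u) e"
  by (rule inverse_unique) (simp add: dic_mult dic_0_False)

lemma qcnj_dic: assumes "n > 0" shows "qcnj (dic n u e) = inverse (dic n u e)"
proof (cases e)
  case True
  have "omega n powi (u + int n) * qJ = omega n powi u * omega n powi int n * qJ"
    by (simp only: mult_omega_powi)
  then have "- (omega n powi u * qJ) = omega n powi (u + int n) * qJ"
    by (simp only: omega_powi_n[OF assms]) simp
  then show ?thesis
    using True unfolding inverse_dic[OF assms] by (simp add: dic_def qcnj_omega_powi_mult_qJ)
qed (simp add: qcnj_omega_powi dic_False power_int_minus)

lemma qcirc_dic:
  "n > 0 \<Longrightarrow> qcirc (dic n s e) (dic n t f) = dic n (if e = f then 2 * s - t else t + int n) f"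
  unfolding qcirc_def by (cases e; cases f) (simp_all add: inverse_dic dic_mult)

lemma DicE: assumes "n > 0" "x \<in> Dic n" obtains u e where "x = dic n u e"
proof -
  have generators: "s \<in> {omega n, qJ} \<Longrightarrow> s = dic n 1 False \<or> s = dic n 0 True" for s
    by (auto simp: dic_0_True dic_False)
  from assms(2) have "\<exists>u e. x = dic n u e" unfolding Dic_def
  proof induction
    case one
    then show ?case by (metis dic_0_False)
  next
    case (mul x s)
    then obtain u e where "x = dic n u e" by blast
    then have "x * s = dic n (if e then u - 1 else u + 1) e
        \<or> x * s = dic n (if e then u + int n else u) (\<not> e)"
      using generators[OF mul.hyps(2)] by (auto simp: dic_mult[OF assms(1)])
    then show ?case by blast
  next
    case (mulinv x s)
    then obtain u e where "x = dic n u e" by blast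
    then have "x * inverse s = dic n (if e then u + 1 else u - 1) e
        \<or> x * inverse s = dic n (if e then u else u + int n) (\<not> e)"
      using generators[OF mulinv.hyps(2)]
      by (auto simp: dic_mult[OF assms(1)] inverse_dic[OF assms(1)])
    then show ?case by blast
  qed
  then show ?thesis using that by blast
qed

lemma dic_multiples:
  assumes "n > 0" "int c * int C = 2 * int n"
  shows "range (\<lambda>k. dic n (int c * k) e) = (\<lambda>k. dic n (int c * k) e) ` {0..<int C}"
    and "inj_on (\<lambda>k. dic n (int c * k) e) {0..<int C}"
proof -
  have "C > 0" "c > 0" using assms by (auto intro: gr0I)
  have "dic n (int c * k) e = dic n (int c * (k mod int C)) e" for k
  proof -
    have "int c * k - int c * (k mod int C) = 2 * int n * (k div int C)"
      by (metis assms(2) minus_mod_eq_mult_div mult.assoc right_diff_distrib)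
    then show ?thesis by (simp add: dic_eq_iff[OF assms(1)])
  qed
  moreover have "k mod int C \<in> {0..<int C}" for k using \<open>C > 0\<close> by simp
  ultimately show "range (\<lambda>k. dic n (int c * k) e) = (\<lambda>k. dic n (int c * k) e) ` {0..<int C}"
    by blast
  show "inj_on (\<lambda>k. dic n (int c * k) e) {0..<int C}"
  proof
    fix k l assume kl: "k \<in> {0..<int C}" "l \<in> {0..<int C}" "dic n (int c * k) e = dic n (int c * l) e"
    then have "int c * int C dvd int c * (k - l)"
      using assms(2) by (simp add: dic_eq_iff[OF assms(1)] algebra_simps)
    then have "int C dvd k - l" using \<open>c > 0\<close> by simp
    then show "k = l" using kl by (simp add: mod_eq_dvd_iff[symmetric])
  qed
qed

lemma card_dic_multiples:
  assumes "n > 0" "int c * int C = 2 * int n"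
  shows "card (range (\<lambda>k. dic n (int c * k) e)) = C"
  by (simp add: dic_multiples[OF assms] card_image)

section \<open>The monomial group attached to a pair of divisors\<close>

lemma dvd_linear_combination:
  "(d :: int) dvd y \<Longrightarrow> d dvd z \<Longrightarrow> d dvd m \<Longrightarrow> w = r * y + s * z + t * m \<Longrightarrow> d dvd w"
  by simp

definition diag_pairs :: "nat \<Rightarrow> nat \<Rightarrow> nat \<Rightarrow> (quat \<times> quat) set" where
  "diag_pairs n a b = {(dic n u e, dic n v e) | u v e.
     2 * int b dvd u + v - of_bool e * int n \<and> 2 * int a dvd u - v - of_bool e * int n}"

definition diag_param :: "nat \<Rightarrow> nat \<Rightarrow> nat \<Rightarrow> int \<times> int \<times> bool \<Rightarrow> quat \<times> quat" where
  "diag_param n a b = (\<lambda>(x, y, e).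
     (dic n (int a * x + int b * y + of_bool e * int n) e, dic n (int b * y - int a * x) e))"

definition monomial_group :: "nat \<Rightarrow> nat \<Rightarrow> nat \<Rightarrow> qmat set" where
  "monomial_group n a b =
     (\<lambda>(p, q). qdiag p q) ` diag_pairs n a b \<union> (\<lambda>(p, q). antidiag p q) ` diag_pairs n a b"

locale divisor_pair =
  fixes n a b :: nat
  assumes n_pos: "0 < n" and a_dvd_n: "a dvd n" and b_dvd_n: "b dvd n"
begin

abbreviation "\<Sigma> \<equiv> diag_pairs n a b"
abbreviation "G \<equiv> monomial_group n a b"

lemma a_pos: "0 < a" and b_pos: "0 < b"
  using n_pos a_dvd_n b_dvd_n by (auto intro: gr0I)

lemma two_a_dvd_two_n: "2 * int a dvd 2 * int n" and two_b_dvd_two_n: "2 * int b dvd 2 * int n"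
  using a_dvd_n b_dvd_n by simp_all

lemma diag_pairsI:
  "2 * int b dvd u + v - of_bool e * int n \<Longrightarrow> 2 * int a dvd u - v - of_bool e * int n
    \<Longrightarrow> (dic n u e, dic n v e) \<in> \<Sigma>"
  unfolding diag_pairs_def by blast

lemma diag_pairsE:
  assumes "(p, q) \<in> \<Sigma>"
  obtains u v e where "p = dic n u e" "q = dic n v e"
    "2 * int b dvd u + v - of_bool e * int n" "2 * int a dvd u - v - of_bool e * int n"
  using assms unfolding diag_pairs_def by blast

lemma diag_pairs_eq_range: "\<Sigma> = range (diag_param n a b)"
proof
  show "\<Sigma> \<subseteq> range (diag_param n a b)"
  proof clarify
    fix p q assume "(p, q) \<in> \<Sigma>"
    then obtain u v e where pq: "p = dic n u e" "q = dic n v e"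
      and "2 * int b dvd u + v - of_bool e * int n" "2 * int a dvd u - v - of_bool e * int n"
      by (rule diag_pairsE)
    then obtain x y where "u + v - of_bool e * int n = 2 * int b * y" "u - v - of_bool e * int n = 2 * int a * x"
      by (meson dvdE)
    then have "u = int a * x + int b * y + of_bool e * int n" "v = int b * y - int a * x"
      by (simp_all add: algebra_simps)
    then show "(p, q) \<in> range (diag_param n a b)"
      unfolding pq diag_param_def by (auto intro!: image_eqI[where x = "(x, y, e)"])
  qed
  show "range (diag_param n a b) \<subseteq> \<Sigma>"
    by (auto simp: diag_param_def algebra_simps intro!: diag_pairsI)
qed

lemma diag_pairs_mult:
  assumes "(p, q) \<in> \<Sigma>" "(p', q') \<in> \<Sigma>" shows "(p * p', q * q') \<in> \<Sigma>"
proof -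
  obtain u v e where 1: "p = dic n u e" "q = dic n v e"
    "2 * int b dvd u + v - of_bool e * int n" "2 * int a dvd u - v - of_bool e * int n"
    using assms(1) by (rule diag_pairsE)
  obtain u' v' e' where 2: "p' = dic n u' e'" "q' = dic n v' e'"
    "2 * int b dvd u' + v' - of_bool e' * int n" "2 * int a dvd u' - v' - of_bool e' * int n"
    using assms(2) by (rule diag_pairsE)
  define U where "U = (if e then u - u' + of_bool e' * int n else u + u')"
  define V where "V = (if e then v - v' + of_bool e' * int n else v + v')"
  have "p * p' = dic n U (e \<noteq> e')" "q * q' = dic n V (e \<noteq> e')"
    unfolding 1 2 U_def V_def by (simp_all add: dic_mult[OF n_pos])
  moreover have "2 * int b dvd U + V - of_bool (e \<noteq> e') * int n"
    by (rule dvd_linear_combination[OF 1(3) 2(3) two_b_dvd_two_n,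
          where r = 1 and s = "if e then -1 else 1" and t = "of_bool (e \<and> e')"])
      (auto simp: U_def V_def)
  moreover have "2 * int a dvd U - V - of_bool (e \<noteq> e') * int n"
    by (rule dvd_linear_combination[OF 1(4) 2(4) two_a_dvd_two_n,
          where r = 1 and s = "if e then -1 else 1" and t = 0])
      (auto simp: U_def V_def)
  ultimately show ?thesis by (metis diag_pairsI)
qed

lemma diag_pairs_swap: assumes "(p, q) \<in> \<Sigma>" shows "(q, p) \<in> \<Sigma>"
proof -
  obtain u v e where 1: "p = dic n u e" "q = dic n v e"
    "2 * int b dvd u + v - of_bool e * int n" "2 * int a dvd u - v - of_bool e * int n"
    using assms by (rule diag_pairsE)
  have "2 * int b dvd v + u - of_bool e * int n" using 1(3) by (simp add: algebra_simps)
  moreover have "2 * int a dvd v - u - of_bool e * int n"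
    by (rule dvd_linear_combination[OF 1(4) 1(4) two_a_dvd_two_n,
          where r = "-1" and s = 0 and t = "- of_bool e"]) simp
  ultimately show ?thesis unfolding 1 by (rule diag_pairsI)
qed

lemma diag_pairs_inverse: assumes "(p, q) \<in> \<Sigma>" shows "(inverse p, inverse q) \<in> \<Sigma>"
proof -
  obtain u v e where 1: "p = dic n u e" "q = dic n v e"
    "2 * int b dvd u + v - of_bool e * int n" "2 * int a dvd u - v - of_bool e * int n"
    using assms by (rule diag_pairsE)
  define U where "U = (if e then u + int n else - u)"
  define V where "V = (if e then v + int n else - v)"
  have "inverse p = dic n U e" "inverse q = dic n V e"
    unfolding 1 U_def V_def by (simp_all add: inverse_dic[OF n_pos])
  moreover have "2 * int b dvd U + V - of_bool e * int n"
    by (rule dvd_linear_combination[OF 1(3) 1(3) two_b_dvd_two_n,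
          where r = "if e then 1 else -1" and s = 0 and t = "of_bool e"])
      (auto simp: U_def V_def)
  moreover have "2 * int a dvd U - V - of_bool e * int n"
    by (rule dvd_linear_combination[OF 1(4) 1(4) two_a_dvd_two_n,
          where r = "if e then 1 else -1" and s = 0 and t = 0])
      (auto simp: U_def V_def)
  ultimately show ?thesis by (metis diag_pairsI)
qed

lemma one_one_in_diag_pairs: "(1, 1) \<in> \<Sigma>"
  using diag_pairsI[of 0 0 False] by (simp add: dic_0_False)

lemma diag_pairs_nonzero: "(p, q) \<in> \<Sigma> \<Longrightarrow> p \<noteq> 0 \<and> q \<noteq> 0"
  by (auto elim: diag_pairsE simp: dic_nonzero)

lemma diag_pairs_qcnj: "(p, q) \<in> \<Sigma> \<Longrightarrow> qcnj p = inverse p \<and> qcnj q = inverse q"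
  by (auto elim: diag_pairsE simp: qcnj_dic[OF n_pos])

lemma monomial_groupE:
  assumes "g \<in> G"
  obtains p q where "(p, q) \<in> \<Sigma>" "g = qdiag p q" | p q where "(p, q) \<in> \<Sigma>" "g = antidiag p q"
  using assms unfolding monomial_group_def by auto

lemma qdiag_in_monomial_group_iff: "qdiag p q \<in> G \<longleftrightarrow> (p, q) \<in> \<Sigma>"
proof
  assume "qdiag p q \<in> G"
  then show "(p, q) \<in> \<Sigma>"
    by (elim monomial_groupE) (auto simp: qdiag_eq_iff qdiag_eq_antidiag_iff dest: diag_pairs_nonzero)
qed (force simp: monomial_group_def)

lemma antidiag_in_monomial_group_iff: "antidiag p q \<in> G \<longleftrightarrow> (p, q) \<in> \<Sigma>"
proof
  assume "antidiag p q \<in> G"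
  then show "(p, q) \<in> \<Sigma>"
    by (elim monomial_groupE)
      (auto simp: antidiag_eq_iff antidiag_eq_qdiag_iff
        dest: diag_pairs_nonzero)
qed (force simp: monomial_group_def)

lemma monomial_group_mult: assumes "g \<in> G" "h \<in> G" shows "g ** h \<in> G"
proof -
  have "(p * p', q * q') \<in> \<Sigma>" "(p * q', q * p') \<in> \<Sigma>" if "(p, q) \<in> \<Sigma>" "(p', q') \<in> \<Sigma>" for p q p' q'
    using that diag_pairs_mult diag_pairs_swap by blast+
  then show ?thesis
    using assms
    by (elim monomial_groupE) (auto simp: qdiag_mult_qdiag qdiag_mult_antidiag antidiag_mult_qdiag
        antidiag_mult_antidiag qdiag_in_monomial_group_iff antidiag_in_monomial_group_iff)
qed

lemma monomial_group_qadj: assumes "g \<in> G" shows "qadj g \<in> G"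
proof -
  have "(qcnj p, qcnj q) \<in> \<Sigma>" "(qcnj q, qcnj p) \<in> \<Sigma>" if "(p, q) \<in> \<Sigma>" for p q
    using that diag_pairs_qcnj diag_pairs_inverse diag_pairs_swap by metis+
  then show ?thesis
    using assms by (elim monomial_groupE)
      (auto simp: qadj_qdiag qadj_antidiag qdiag_in_monomial_group_iff antidiag_in_monomial_group_iff)
qed

lemma mat_1_in_monomial_group: "mat 1 \<in> G"
  using one_one_in_diag_pairs by (simp add: mat_1_eq_qdiag qdiag_in_monomial_group_iff)

lemma mgen_subset_monomial_group: "S \<subseteq> G \<Longrightarrow> mgen S \<subseteq> G"
  by (rule mgen_least) (auto intro: mat_1_in_monomial_group monomial_group_mult monomial_group_qadj)

lemma unitary_monomial_group: assumes "g \<in> G" shows "unitary g"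
proof -
  have "qcnj p * p = 1 \<and> qcnj q * q = 1" if "(p, q) \<in> \<Sigma>" for p q
    using diag_pairs_qcnj[OF that] diag_pairs_nonzero[OF that] by simp
  then show ?thesis
    using assms by (elim monomial_groupE) (auto intro: unitary_qdiag unitary_antidiag)
qed

end

section \<open>The reflection system and the group it generates\<close>

lemma dic_multiples_in_Lcl:
  assumes "n > 0" "dic n 0 e \<in> Lcl X" "dic n c e \<in> Lcl X"
  shows "dic n (c * k) e \<in> Lcl X"
proof -
  have "dic n (c * int m) e \<in> Lcl X \<and> dic n (c * int (Suc m)) e \<in> Lcl X" for m
  proof (induction m)
    case (Suc m)
    have "dic n (c * int (Suc (Suc m))) e = qcirc (dic n (c * int (Suc m)) e) (dic n (c * int m) e)"
      by (simp add: qcirc_dic[OF assms(1)] algebra_simps)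
    then show ?case using Suc by (simp add: Lcl.circ)
  qed (use assms in simp)
  moreover have "k mod (2 * int n) = int (nat (k mod (2 * int n)))"
    using assms(1) by simp
  ultimately show ?thesis by (metis dic_mult_mod[OF assms(1)])
qed

definition refl_set :: "nat \<Rightarrow> nat \<Rightarrow> nat \<Rightarrow> quat set" where
  "refl_set n a b = range (\<lambda>k. dic n (int a * k) False) \<union> range (\<lambda>k. dic n (int b * k) True)"

context divisor_pair
begin

abbreviation "L \<equiv> refl_set n a b"

lemma refl_setE:
  assumes "x \<in> L"
  obtains k where "x = dic n (int a * k) False" | k where "x = dic n (int b * k) True"
  using assms unfolding refl_set_def by blast

lemma refl_setI: "dic n (int a * k) False \<in> L" "dic n (int b * k) True \<in> L"
  unfolding refl_set_def by blast+

lemma qcirc_refl_set: assumes "x \<in> L" "y \<in> L" shows "qcirc x y \<in> L"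
proof -
  obtain A B where A: "int n = int a * A" and B: "int n = int b * B"
    using a_dvd_n b_dvd_n by (metis dvdE of_nat_mult)
  have shifted: "dic n (int a * l + int n) False \<in> L" "dic n (int b * l + int n) True \<in> L" for l
    using refl_setI(1)[of "l + A"] refl_setI(2)[of "l + B"]
    by (simp add: A distrib_left, simp add: B distrib_left)
  have "qcirc (dic n (int a * k) False) (dic n (int a * l) False) = dic n (int a * (2 * k - l)) False"
    "qcirc (dic n (int b * k) True) (dic n (int b * l) True) = dic n (int b * (2 * k - l)) True"
    "qcirc (dic n (int b * k) True) (dic n (int a * l) False) = dic n (int a * l + int n) False"
    "qcirc (dic n (int a * k) False) (dic n (int b * l) True) = dic n (int b * l + int n) True"
    for k l
    by (simp_all add: qcirc_dic[OF n_pos] algebra_simps)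
  then show ?thesis
    using assms by (elim refl_setE) (simp_all add: refl_setI shifted)
qed

lemma Lsys_eq_refl_set: "Lsys n a b = L"
proof -
  have generators: "Lsys n a b = Lcl {dic n 0 False, dic n (int a) False, dic n 0 True, dic n (int b) True}"
    by (simp add: Lsys_def dic_def)
  show ?thesis
  proof
    show "Lsys n a b \<subseteq> L"
    proof
      fix x assume "x \<in> Lsys n a b"
      then show "x \<in> L"
        unfolding generators
      proof induction
        case (base x)
        then show ?case using refl_setI[of 0] refl_setI[of 1] by auto
      qed (rule qcirc_refl_set)
    qed
    show "L \<subseteq> Lsys n a b"
    proof
      fix x assume "x \<in> L"
      then show "x \<in> Lsys n a b"
        unfolding generators
        using dic_multiples_in_Lcl[OF n_pos, of False _ "int a"] dic_multiples_in_Lcl[OF n_pos, of True _ "int b"]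
        by (elim refl_setE) (simp_all add: Lcl.base)
    qed
  qed
qed

lemma refl_set_if_inverse_pair: assumes "(c, inverse c) \<in> \<Sigma>" shows "c \<in> L"
proof -
  obtain u v e where uv: "c = dic n u e" "inverse c = dic n v e"
    "2 * int b dvd u + v - of_bool e * int n" "2 * int a dvd u - v - of_bool e * int n"
    using assms by (rule diag_pairsE)
  have inv: "2 * int n dvd (if e then u + int n else - u) - v"
    using uv(1,2) by (simp add: inverse_dic[OF n_pos] dic_eq_iff[OF n_pos])
  show "c \<in> L"
  proof (cases e)
    case True
    then have "2 * int b dvd u + int n - v" using inv two_b_dvd_two_n dvd_trans by auto
    then have "2 * int b dvd 2 * u"
      by (rule dvd_linear_combination[OF uv(3) _ two_b_dvd_two_n, where r = 1 and s = 1 and t = 0])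
        (simp add: True)
    then have "int b dvd u" by simp
    then obtain k where "u = int b * k" by (rule dvdE)
    then show ?thesis using uv(1) True refl_setI by simp
  next
    case False
    then have "2 * int a dvd - u - v" using inv two_a_dvd_two_n dvd_trans by auto
    then have "2 * int a dvd 2 * u"
      by (rule dvd_linear_combination[OF uv(4) _ two_a_dvd_two_n, where r = 1 and s = "-1" and t = 0])
        (simp add: False)
    then have "int a dvd u" by simp
    then obtain k where "u = int a * k" by (rule dvdE)
    then show ?thesis using uv(1) False refl_setI by simp
  qed
qed

lemma inverse_pair_in_diag_pairs_iff: "(c, inverse c) \<in> \<Sigma> \<longleftrightarrow> c \<in> L"
proof
  assume "c \<in> L"
  then show "(c, inverse c) \<in> \<Sigma>"
  proof (cases rule: refl_setE)
    case (1 k)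
    then show ?thesis using diag_pairsI[of "int a * k" "- (int a * k)" False]
      by (simp add: inverse_dic[OF n_pos])
  next
    case (2 k)
    then show ?thesis using diag_pairsI[of "int b * k" "int b * k + int n" True] two_a_dvd_two_n
      by (simp add: inverse_dic[OF n_pos])
  qed
qed (rule refl_set_if_inverse_pair)

lemma Mb_in_monomial_group_iff: "Mb c \<in> G \<longleftrightarrow> c \<in> L"
  by (simp add: Mb_eq_antidiag antidiag_in_monomial_group_iff inverse_pair_in_diag_pairs_iff)

end

lemma qdiag_omega_powi_multiples_in_mgen:
  assumes "n > 0" "qdiag (omega n powi c) (omega n powi d) \<in> mgen S"
  shows "qdiag (omega n powi (c * k)) (omega n powi (d * k)) \<in> mgen S"
proof -
  have "qdiag (omega n powi (c * int m)) (omega n powi (d * int m)) \<in> mgen S" for m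
  proof (induction m)
    case 0
    then show ?case using mgen.one by (simp add: mat_1_eq_qdiag)
  next
    case (Suc m)
    then show ?case
      using mgen_mult_closed[OF Suc assms(2)]
      by (simp add: qdiag_mult_qdiag mult_omega_powi algebra_simps)
  qed
  moreover have "k mod (2 * int n) = int (nat (k mod (2 * int n)))"
    using assms(1) by simp
  ultimately show ?thesis by (metis dic_mult_mod[OF assms(1)] dic_False)
qed

context divisor_pair
begin

lemma Mb_in_mgen: "c \<in> L \<Longrightarrow> Mb c \<in> mgen (Mb ` L)"
  by (intro mgen_generator imageI)

lemma antidiag_1_1_in_mgen: "antidiag 1 1 \<in> mgen (Mb ` L)"
  using Mb_in_mgen[OF refl_setI(1)[of 0]] by (simp add: Mb_eq_antidiag dic_0_False)

lemma qdiag_omega_a_in_mgen: "qdiag (omega n powi int a) (omega n powi (- int a)) \<in> mgen (Mb ` L)"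
  and qdiag_omega_b_in_mgen: "qdiag (omega n powi int b) (omega n powi int b) \<in> mgen (Mb ` L)"
  and qdiag_j_in_mgen: "qdiag (dic n (int n) True) (dic n 0 True) \<in> mgen (Mb ` L)"
proof -
  show "qdiag (omega n powi int a) (omega n powi (- int a)) \<in> mgen (Mb ` L)"
    using mgen_mult_closed[OF Mb_in_mgen[OF refl_setI(1)[of 1]] antidiag_1_1_in_mgen]
    by (simp add: Mb_eq_antidiag antidiag_mult_antidiag inverse_dic[OF n_pos] dic_False
        power_int_minus)
  have "dic n (int b + int n + int n) False = dic n (int b) False"
    by (simp add: dic_eq_iff[OF n_pos])
  then show "qdiag (omega n powi int b) (omega n powi int b) \<in> mgen (Mb ` L)"
    using mgen_mult_closed[OF Mb_in_mgen[OF refl_setI(2)[of 1]] Mb_in_mgen[OF refl_setI(2)[of 0]]]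
    by (simp add: Mb_eq_antidiag antidiag_mult_antidiag inverse_dic[OF n_pos] dic_mult[OF n_pos]
        dic_False)
  show "qdiag (dic n (int n) True) (dic n 0 True) \<in> mgen (Mb ` L)"
    using mgen_mult_closed[OF antidiag_1_1_in_mgen Mb_in_mgen[OF refl_setI(2)[of 0]]]
    by (simp add: Mb_eq_antidiag antidiag_mult_antidiag inverse_dic[OF n_pos])
qed

lemma qdiag_in_mgen: assumes "(p, q) \<in> \<Sigma>" shows "qdiag p q \<in> mgen (Mb ` L)"
proof -
  obtain x y e where pq: "(p, q) = diag_param n a b (x, y, e)"
    using assms diag_pairs_eq_range by (metis prod_cases3 rangeE)
  have xy: "qdiag (omega n powi (int a * x + int b * y)) (omega n powi (int b * y - int a * x))
      \<in> mgen (Mb ` L)"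
    using mgen_mult_closed[OF qdiag_omega_powi_multiples_in_mgen[OF n_pos qdiag_omega_a_in_mgen, of x]
        qdiag_omega_powi_multiples_in_mgen[OF n_pos qdiag_omega_b_in_mgen, of y]]
    by (simp add: qdiag_mult_qdiag mult_omega_powi algebra_simps)
  show ?thesis
  proof (cases e)
    case True
    then show ?thesis
      using pq mgen_mult_closed[OF xy qdiag_j_in_mgen]
      by (simp add: diag_param_def qdiag_mult_qdiag dic_mult[OF n_pos] flip: dic_False)
  next
    case False
    then show ?thesis using pq xy by (simp add: diag_param_def dic_False)
  qed
qed

lemma monomial_group_subset_mgen: "G \<subseteq> mgen (Mb ` L)"
proof
  fix g assume "g \<in> G"
  then show "g \<in> mgen (Mb ` L)"
  proof (cases rule: monomial_groupE)
    case (2 p q)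
    then show ?thesis
      using mgen_mult_closed[OF qdiag_in_mgen[OF 2(1)] antidiag_1_1_in_mgen]
      by (simp add: qdiag_mult_antidiag)
  qed (simp add: qdiag_in_mgen)
qed

lemma mgen_Mb_refl_set: "mgen (Mb ` L) = G"
proof
  show "mgen (Mb ` L) \<subseteq> G"
    by (rule mgen_subset_monomial_group) (auto simp: Mb_in_monomial_group_iff)
qed (rule monomial_group_subset_mgen)

end

section \<open>The group H_L\<close>

context divisor_pair
begin

abbreviation "H \<equiv> range (\<lambda>k. omega n powi (2 * int (lcm a b) * k))"

lemma lcm_dvd_n: "lcm a b dvd n"
  by (simp add: a_dvd_n b_dvd_n)

lemma two_a_two_b_dvd_iff: "2 * int a dvd u \<and> 2 * int b dvd u \<longleftrightarrow> 2 * int (lcm a b) dvd u"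
proof -
  have "lcm (2 * int a) (2 * int b) = 2 * int (lcm a b)"
    by (simp add: lcm_mult_left)
  then show ?thesis by (metis lcm_least_iff)
qed

lemma diag_pairs_left_iff: "(h, 1) \<in> \<Sigma> \<longleftrightarrow> h \<in> H"
proof
  assume "(h, 1) \<in> \<Sigma>"
  then obtain u v e where uv: "h = dic n u e" "1 = dic n v e"
    "2 * int b dvd u + v - of_bool e * int n" "2 * int a dvd u - v - of_bool e * int n"
    by (rule diag_pairsE)
  from uv(2) have "\<not> e" "2 * int n dvd v"
    using dic_eq_iff[OF n_pos, of v e 0 False] by (simp_all add: dic_0_False)
  then have "2 * int a dvd v" "2 * int b dvd v"
    using two_a_dvd_two_n two_b_dvd_two_n dvd_trans by blast+
  moreover have "2 * int a dvd u - v" "2 * int b dvd u + v"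
    using uv(3,4) \<open>\<not> e\<close> by simp_all
  ultimately have "2 * int a dvd u" "2 * int b dvd u"
    by (metis diff_add_cancel dvd_add, metis add_diff_cancel_right' dvd_diff)
  then obtain k where "u = 2 * int (lcm a b) * k"
    using two_a_two_b_dvd_iff by (metis dvdE)
  then show "h \<in> H" using uv(1) \<open>\<not> e\<close> by (simp add: dic_False)
next
  assume "h \<in> H"
  then obtain k where k: "h = omega n powi (2 * int (lcm a b) * k)" by blast
  have "2 * int a dvd 2 * int (lcm a b) * k" "2 * int b dvd 2 * int (lcm a b) * k"
    using two_a_two_b_dvd_iff by auto
  then show "(h, 1) \<in> \<Sigma>"
    using diag_pairsI[of "2 * int (lcm a b) * k" 0 False] k by (simp add: dic_False)
qed

lemma diag_pairs_right_iff: "(1, h) \<in> \<Sigma> \<longleftrightarrow> h \<in> H"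
  using diag_pairs_left_iff diag_pairs_swap by blast

lemma HL_refl_set: "HL L = H"
  using diag_pairs_left_iff by (auto simp: HL_def mgen_Mb_refl_set qdiag_in_monomial_group_iff)

lemma H_eq_qgen: "H = qgen {omega n ^ (2 * lcm a b)}"
proof -
  have "(omega n ^ (2 * lcm a b)) powi k = omega n powi (2 * int (lcm a b) * k)" for k
    by (simp add: power_int_power)
  then show ?thesis by (simp add: qgen_singleton omega_nonzero)
qed

lemma finite_H: "finite H" and card_H: "card H = n div lcm a b"
proof -
  obtain m where m: "n = lcm a b * m" using lcm_dvd_n by (rule dvdE)
  have "int (2 * lcm a b) * int m = 2 * int n" using m by simp
  note multiples = dic_multiples[OF n_pos this, of False] card_dic_multiples[OF n_pos this, of False]
  have H_eq: "H = range (\<lambda>k. dic n (int (2 * lcm a b) * k) False)"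
    by (simp add: dic_False)
  show "finite H" unfolding H_eq multiples(1) by simp
  show "card H = n div lcm a b" unfolding H_eq multiples(3) using m n_pos by simp
qed

lemma one_in_H: "1 \<in> H"
  by (metis mult_zero_right power_int_0_right rangeI)

lemma lcm_as_multiples:
  obtains c d where "int (lcm a b) = int a * c" "int (lcm a b) = int b * d"
  by (metis dvd_lcm1 dvd_lcm2 dvdE of_nat_mult)

lemma H_subset_refl_set: "H \<subseteq> L"
proof
  fix h assume "h \<in> H"
  then obtain k where "h = omega n powi (2 * int (lcm a b) * k)" by blast
  moreover obtain c where "int (lcm a b) = int a * c" using lcm_as_multiples by metis
  ultimately have "h = dic n (int a * (2 * c * k)) False" by (simp add: dic_False ac_simps)
  then show "h \<in> L" by (simp add: refl_setI)
qed

lemma refl_set_mult_H: "{x * h | x h. x \<in> L \<and> h \<in> H} = L"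
proof
  show "L \<subseteq> {x * h | x h. x \<in> L \<and> h \<in> H}" using one_in_H by force
  obtain c d where c: "int (lcm a b) = int a * c" and d: "int (lcm a b) = int b * d"
    by (rule lcm_as_multiples)
  have "dic n (int a * k) False * omega n powi (2 * int (lcm a b) * m) = dic n (int a * (k + 2 * c * m)) False"
    for k m unfolding c by (simp add: dic_mult[OF n_pos] algebra_simps flip: dic_False)
  moreover have "dic n (int b * k) True * omega n powi (2 * int (lcm a b) * m) = dic n (int b * (k - 2 * d * m)) True"
    for k m unfolding d by (simp add: dic_mult[OF n_pos] algebra_simps flip: dic_False)
  ultimately show "{x * h | x h. x \<in> L \<and> h \<in> H} \<subseteq> L"
    by (auto elim!: refl_setE simp: refl_setI)
qed

lemma conj_in_H: assumes "k \<in> Dic n" "h \<in> H" shows "k * h * inverse k \<in> H"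
proof -
  obtain s e where k: "k = dic n s e" using DicE[OF n_pos assms(1)] .
  obtain m where h: "h = dic n (2 * int (lcm a b) * m) False" using assms(2) by (auto simp: dic_False)
  have "k * h * inverse k = dic n (2 * int (lcm a b) * (if e then - m else m)) False"
    unfolding k h by (simp add: dic_mult[OF n_pos] inverse_dic[OF n_pos])
  then show ?thesis by (simp add: dic_False)
qed

lemma Ggrp_refl_set: "Ggrp L H = G"
proof
  have "(\<lambda>h. qdiag h 1) ` H \<union> (\<lambda>h. qdiag 1 h) ` H \<union> Mb ` L \<subseteq> G"
    using diag_pairs_left_iff diag_pairs_right_iff
    by (auto simp: qdiag_in_monomial_group_iff Mb_in_monomial_group_iff)
  then show "Ggrp L H \<subseteq> G" unfolding Ggrp_def by (rule mgen_subset_monomial_group)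
  have "mgen (Mb ` L) \<subseteq> Ggrp L H" unfolding Ggrp_def by (rule mgen_mono) auto
  then show "G \<subseteq> Ggrp L H" by (simp only: mgen_Mb_refl_set)
qed

lemma canonical_refl_set: "canonical L H"
  unfolding canonical_def Ggrp_refl_set Mb_in_monomial_group_iff by simp

end

section \<open>Counting\<close>

context divisor_pair
begin

lemma a_mult_n_div_a: "int a * int (n div a) = int n" and b_mult_n_div_b: "int b * int (n div b) = int n"
  using a_dvd_n b_dvd_n by (simp_all flip: of_nat_mult)

lemma n_div_a_pos: "n div a > 0" and n_div_b_pos: "n div b > 0"
  using a_dvd_n b_dvd_n n_pos by (auto simp: dvd_div_eq_0_iff intro: gr0I)

lemma diag_pairs_eq_image:
  "\<Sigma> = diag_param n a b ` ({0..<int (n div a)} \<times> {0..<2 * int (n div b)} \<times> UNIV)"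
proof
  define A B where "A = int (n div a)" and "B = int (n div b)"
  have nA: "int a * A = int n" and nB: "int b * B = int n"
    using a_mult_n_div_a b_mult_n_div_b by (simp_all add: A_def B_def)
  have "A > 0" "B > 0"
    using n_div_a_pos n_div_b_pos by (simp_all add: A_def B_def)
  show "\<Sigma> \<subseteq> diag_param n a b ` ({0..<A} \<times> {0..<2 * B} \<times> UNIV)"
  proof
    fix pq assume "pq \<in> \<Sigma>"
    then obtain x y e where pq: "pq = diag_param n a b (x, y, e)"
      using diag_pairs_eq_range by (metis prod_cases3 rangeE)
    \<comment> \<open>the pair is unchanged by (x, y) \<mapsto> (x + A, y + B) and by y \<mapsto> y + 2 B\<close>
    define q r where "q = x div A" and "r = (y - q * B) div (2 * B)"
    define x' y' where "x' = x mod A" and "y' = (y - q * B) mod (2 * B)"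
    have x: "x = x' + q * A" unfolding x'_def q_def by simp
    have y: "y = y' + q * B + r * (2 * B)" unfolding y'_def r_def
      using mod_div_mult_eq[of "y - q * B" "2 * B"] by linarith
    have "(int a * x + int b * y) - (int a * x' + int b * y')
        = q * (int a * A) + q * (int b * B) + 2 * r * (int b * B)"
      unfolding x y by (simp add: algebra_simps)
    also have "\<dots> = 2 * int n * (q + r)" unfolding nA nB by (simp add: algebra_simps)
    moreover have "(int b * y - int a * x) - (int b * y' - int a * x')
        = q * (int b * B) + 2 * r * (int b * B) - q * (int a * A)"
      unfolding x y by (simp add: algebra_simps)
    moreover have "\<dots> = 2 * int n * r" by (simp add: nA nB)
    ultimately have "pq = diag_param n a b (x', y', e)"
      unfolding pq diag_param_def by (simp add: dic_eq_iff[OF n_pos])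
    moreover have "(x', y', e) \<in> {0..<A} \<times> {0..<2 * B} \<times> UNIV"
      unfolding x'_def y'_def using \<open>A > 0\<close> \<open>B > 0\<close> by simp
    ultimately show "pq \<in> diag_param n a b ` ({0..<A} \<times> {0..<2 * B} \<times> UNIV)" by blast
  qed
  show "diag_param n a b ` ({0..<A} \<times> {0..<2 * B} \<times> UNIV) \<subseteq> \<Sigma>"
    using diag_pairs_eq_range by auto
qed

lemma inj_on_diag_param:
  "inj_on (diag_param n a b) ({0..<int (n div a)} \<times> {0..<2 * int (n div b)} \<times> UNIV)"
proof (rule inj_onI)
  define A B where "A = int (n div a)" and "B = int (n div b)"
  have nA: "int n = int a * A" and nB: "int n = int b * B"
    using a_mult_n_div_a b_mult_n_div_b by (simp_all add: A_def B_def)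
  fix s t
  assume "s \<in> {0..<A} \<times> {0..<2 * B} \<times> UNIV" "t \<in> {0..<A} \<times> {0..<2 * B} \<times> UNIV"
    and eq: "diag_param n a b s = diag_param n a b t"
  moreover obtain x y e x' y' e' where st: "s = (x, y, e)" "t = (x', y', e')"
    by (metis prod_cases3)
  ultimately have box: "x \<in> {0..<A}" "y \<in> {0..<2 * B}" "x' \<in> {0..<A}" "y' \<in> {0..<2 * B}"
    and e: "e' = e"
    and d1: "2 * int n dvd (int a * x + int b * y) - (int a * x' + int b * y')"
    and d2: "2 * int n dvd (int b * y - int a * x) - (int b * y' - int a * x')"
    by (auto simp: diag_param_def dic_eq_iff[OF n_pos])
  have "2 * int n dvd 2 * int a * (x - x')"
    using dvd_diff[OF d1 d2] by (simp add: algebra_simps)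
  then have "int a * (2 * A) dvd int a * (2 * (x - x'))" by (simp add: nA algebra_simps)
  then have "2 * A dvd 2 * (x - x')" using a_pos by simp
  then have "x = x'" using box by (simp add: mod_eq_dvd_iff[symmetric])
  with d1 have "int b * (2 * B) dvd int b * (y - y')" by (simp add: nB algebra_simps)
  then have "2 * B dvd y - y'" using b_pos by simp
  then have "y = y'" using box by (simp add: mod_eq_dvd_iff[symmetric])
  with \<open>x = x'\<close> e st show "s = t" by simp
qed

lemma finite_diag_pairs: "finite \<Sigma>" and card_diag_pairs: "card \<Sigma> = 4 * (n div a) * (n div b)"
proof -
  show "finite \<Sigma>" unfolding diag_pairs_eq_image by simp
  have "card \<Sigma> = card ({0..<int (n div a)} \<times> {0..<2 * int (n div b)} \<times> (UNIV :: bool set))"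
    unfolding diag_pairs_eq_image by (rule card_image[OF inj_on_diag_param])
  also have "\<dots> = 4 * (n div a) * (n div b)"
    by (simp add: card_cartesian_product nat_mult_distrib)
  finally show "card \<Sigma> = 4 * (n div a) * (n div b)" .
qed

lemma finite_monomial_group: "finite G" and card_monomial_group: "card G = 8 * (n div a) * (n div b)"
proof -
  have inj: "inj_on (\<lambda>(p, q). qdiag p q) \<Sigma>" "inj_on (\<lambda>(p, q). antidiag p q) \<Sigma>"
    by (auto intro!: inj_onI simp: qdiag_eq_iff antidiag_eq_iff)
  have disjoint: "(\<lambda>(p, q). qdiag p q) ` \<Sigma> \<inter> (\<lambda>(p, q). antidiag p q) ` \<Sigma> = {}"
    using diag_pairs_nonzero by (fastforce simp: qdiag_eq_antidiag_iff)
  show "finite G" unfolding monomial_group_def using finite_diag_pairs by simp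
  show "card G = 8 * (n div a) * (n div b)"
    unfolding monomial_group_def using finite_diag_pairs disjoint
    by (simp add: card_Un_disjoint card_image[OF inj(1)] card_image[OF inj(2)] card_diag_pairs)
qed

lemma finite_refl_set: "finite L" and card_refl_set: "card L = 2 * (n div a) + 2 * (n div b)"
proof -
  have "int a * int (2 * (n div a)) = 2 * int n" "int b * int (2 * (n div b)) = 2 * int n"
    using a_mult_n_div_a b_mult_n_div_b by (simp_all add: algebra_simps)
  note a_part = dic_multiples[OF n_pos this(1), of False] card_dic_multiples[OF n_pos this(1), of False]
   and b_part = dic_multiples[OF n_pos this(2), of True] card_dic_multiples[OF n_pos this(2), of True]
  have disjoint: "range (\<lambda>k. dic n (int a * k) False) \<inter> range (\<lambda>k. dic n (int b * k) True) = {}"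
    by (auto simp: dic_eq_iff[OF n_pos])
  show "finite L" unfolding refl_set_def a_part(1) b_part(1) by simp
  show "card L = 2 * (n div a) + 2 * (n div b)"
    using disjoint a_part b_part unfolding refl_set_def
    by (simp add: card_Un_disjoint del: image_iff)
qed

lemma reflections_monomial_group:
  "{g \<in> G. is_reflection g} = (\<lambda>h. qdiag h 1) ` (H - {1}) \<union> (\<lambda>h. qdiag 1 h) ` (H - {1}) \<union> Mb ` L"
proof (intro equalityI subsetI)
  fix g assume "g \<in> {g \<in> G. is_reflection g}"
  then have g: "g \<in> G" "is_reflection g" by simp_all
  then show "g \<in> (\<lambda>h. qdiag h 1) ` (H - {1}) \<union> (\<lambda>h. qdiag 1 h) ` (H - {1}) \<union> Mb ` L"
  proof (cases rule: monomial_groupE)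
    case (1 p q)
    then have "p = 1 \<longleftrightarrow> q \<noteq> 1"
      using g is_reflection_qdiag unitary_monomial_group by blast
    then show ?thesis
      using 1 diag_pairs_left_iff diag_pairs_right_iff by auto
  next
    case (2 p q)
    then have "q * p = 1"
      using g is_reflection_antidiag unitary_monomial_group by blast
    then have "q = inverse p"
      using inverse_unique[of q p] by auto
    then show ?thesis
      using 2 g(1) by (auto simp: Mb_eq_antidiag simp flip: Mb_in_monomial_group_iff)
  qed
next
  have "qdiag h 1 \<in> G \<and> is_reflection (qdiag h 1)" "qdiag 1 h \<in> G \<and> is_reflection (qdiag 1 h)"
    if "h \<in> H - {1}" for h
    using that diag_pairs_left_iff diag_pairs_right_iff unitary_monomial_group
    by (auto simp: qdiag_in_monomial_group_iff is_reflection_qdiag)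
  moreover have "Mb c \<in> G \<and> is_reflection (Mb c)" if "c \<in> L" for c
  proof
    show "Mb c \<in> G" using that by (simp add: Mb_in_monomial_group_iff)
    moreover have "c \<noteq> 0" using that by (auto elim: refl_setE simp: dic_nonzero)
    ultimately show "is_reflection (Mb c)"
      using unitary_monomial_group by (simp add: Mb_eq_antidiag is_reflection_antidiag)
  qed
  ultimately show "g \<in> {g \<in> G. is_reflection g}"
    if "g \<in> (\<lambda>h. qdiag h 1) ` (H - {1}) \<union> (\<lambda>h. qdiag 1 h) ` (H - {1}) \<union> Mb ` L" for g
    using that by blast
qed

lemma card_reflections:
  "card {g \<in> G. is_reflection g} = 2 * (n div lcm a b - 1) + 2 * (n div a) + 2 * (n div b)"
proof -
  let ?left = "(\<lambda>h. qdiag h 1) ` (H - {1})" and ?right = "(\<lambda>h. qdiag 1 h) ` (H - {1})"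
  have inj: "inj_on (\<lambda>h. qdiag h 1) (H - {1})" "inj_on (\<lambda>h. qdiag 1 h) (H - {1})" "inj_on Mb L"
    by (auto intro!: inj_onI simp: qdiag_eq_iff Mb_eq_antidiag antidiag_eq_iff)
  have finite: "finite ?left" "finite ?right" "finite (Mb ` L)"
    using finite_H finite_refl_set by simp_all
  have "card (?left \<union> ?right \<union> Mb ` L) = card ?left + card ?right + card (Mb ` L)"
  proof (subst card_Un_disjoint)
    show "(?left \<union> ?right) \<inter> Mb ` L = {}"
      by (auto simp: Mb_eq_antidiag qdiag_eq_antidiag_iff antidiag_eq_qdiag_iff)
    show "card (?left \<union> ?right) + card (Mb ` L) = card ?left + card ?right + card (Mb ` L)"
      using finite by (subst card_Un_disjoint) (auto simp: qdiag_eq_iff)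
  qed (use finite in auto)
  also have "\<dots> = card (H - {1}) + card (H - {1}) + card L"
    by (simp only: card_image[OF inj(1)] card_image[OF inj(2)] card_image[OF inj(3)])
  also have "card (H - {1}) = n div lcm a b - 1"
    using finite_H card_H one_in_H by simp
  finally show ?thesis
    unfolding reflections_monomial_group card_refl_set by simp
qed

lemma real_card_monomial_group: "real (card G) = 8 * real n ^ 2 / real (a * b)"
  using a_dvd_n b_dvd_n a_pos b_pos
  by (simp add: card_monomial_group real_of_nat_div power2_eq_square)

lemma real_card_reflections:
  "real (card {g \<in> G. is_reflection g})
     = 2 * real n / real (lcm a b) + 2 * real n / real a + 2 * real n / real b - 2"
proof -
  have "n div lcm a b \<noteq> 0"
    using dvd_div_eq_0_iff[OF lcm_dvd_n] n_pos by simp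
  then show ?thesis
    using a_dvd_n b_dvd_n lcm_dvd_n
    by (simp add: card_reflections real_of_nat_div of_nat_diff)
qed

lemma Cyc_eq_H: "Cyc n (n div lcm a b) = H"
proof -
  obtain m where m: "n = lcm a b * m" using lcm_dvd_n by (rule dvdE)
  then have "m > 0" using n_pos by (simp add: gr0I)
  then have "2 * n div (n div lcm a b) = 2 * lcm a b"
    using m a_pos b_pos by (simp add: lcm_pos_nat)
  then show ?thesis by (simp add: Cyc_def H_eq_qgen)
qed

lemma base_group_refl_set: "base_group L = G"
  by (simp add: base_group_def HL_refl_set Ggrp_refl_set)

lemma opposite_powers_in_diag_pairs_iff:
  "(omega n powi c, omega n powi (- c)) \<in> \<Sigma> \<longleftrightarrow> int a dvd c"
proof
  assume "(omega n powi c, omega n powi (- c)) \<in> \<Sigma>"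
  then have pair: "(dic n c False, dic n (- c) False) \<in> \<Sigma>" by (simp add: dic_False)
  obtain u v e where uv: "dic n c False = dic n u e" "dic n (- c) False = dic n v e"
    "2 * int b dvd u + v - of_bool e * int n" "2 * int a dvd u - v - of_bool e * int n"
    using pair by (rule diag_pairsE)
  have "\<not> e" "2 * int n dvd c - u" "2 * int n dvd - c - v"
    using uv(1) uv(2) by (simp_all add: dic_eq_iff[OF n_pos])
  then have cu: "2 * int a dvd c - u" and cv: "2 * int a dvd - c - v"
    by (simp_all add: dvd_trans[OF two_a_dvd_two_n])
  have uv_dvd: "2 * int a dvd u - v" using uv(4) \<open>\<not> e\<close> by simp
  have "2 * int a dvd (u - v) + (c - u) - (- c - v)"
    by (rule dvd_diff[OF dvd_add[OF uv_dvd cu] cv])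
  then show "int a dvd c" by simp
next
  assume "int a dvd c"
  then show "(omega n powi c, omega n powi (- c)) \<in> \<Sigma>"
    using diag_pairsI[of c "- c" False] by (simp add: dic_False)
qed

lemma equal_powers_in_diag_pairs_iff:
  "(omega n powi c, omega n powi c) \<in> \<Sigma> \<longleftrightarrow> int b dvd c"
proof
  assume "(omega n powi c, omega n powi c) \<in> \<Sigma>"
  then have pair: "(dic n c False, dic n c False) \<in> \<Sigma>" by (simp add: dic_False)
  obtain u v e where uv: "dic n c False = dic n u e" "dic n c False = dic n v e"
    "2 * int b dvd u + v - of_bool e * int n" "2 * int a dvd u - v - of_bool e * int n"
    using pair by (rule diag_pairsE)
  have "\<not> e" "2 * int n dvd c - u" using uv(1) by (simp_all add: dic_eq_iff[OF n_pos])
  moreover have "2 * int n dvd c - v" using uv(2) by (simp add: dic_eq_iff[OF n_pos])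
  ultimately have cu: "2 * int b dvd c - u" and cv: "2 * int b dvd c - v"
    by (simp_all add: dvd_trans[OF two_b_dvd_two_n])
  have uv_dvd: "2 * int b dvd u + v" using uv(3) \<open>\<not> e\<close> by simp
  have "2 * int b dvd (u + v) + (c - u) + (c - v)"
    by (rule dvd_add[OF dvd_add[OF uv_dvd cu] cv])
  then show "int b dvd c" by simp
next
  assume "int b dvd c"
  then show "(omega n powi c, omega n powi c) \<in> \<Sigma>"
    using diag_pairsI[of c c False] by (simp add: dic_False)
qed

end

lemma monomial_group_eq_imp_eq:
  assumes "divisor_pair n a b" "divisor_pair n a' b'" "monomial_group n a b = monomial_group n a' b'"
  shows "a = a' \<and> b = b'"
proof -
  interpret X: divisor_pair n a b by fact
  interpret Y: divisor_pair n a' b' by fact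
  have same_pairs: "diag_pairs n a b = diag_pairs n a' b'"
    using X.qdiag_in_monomial_group_iff Y.qdiag_in_monomial_group_iff assms(3) by auto
  have "int a' dvd int a" "int a dvd int a'"
    using X.opposite_powers_in_diag_pairs_iff Y.opposite_powers_in_diag_pairs_iff same_pairs
    by (metis dvd_refl)+
  moreover have "int b' dvd int b" "int b dvd int b'"
    using X.equal_powers_in_diag_pairs_iff Y.equal_powers_in_diag_pairs_iff same_pairs
    by (metis dvd_refl)+
  ultimately show ?thesis by (simp add: dvd_antisym)
qed

lemma Omega_divisor_pair: "n \<ge> 2 \<Longrightarrow> (a, b) \<in> Omega n \<Longrightarrow> divisor_pair n a b"
  by unfold_locales (auto simp: Omega_def)

lemma Omega_lcm: "(a, b) \<in> Omega n \<Longrightarrow> lcm a b = a * b"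
  by (simp add: Omega_def lcm_coprime)

theorem theorem5p3:
  fixes n :: nat
  assumes "n \<ge> 2"
  shows "(\<forall>(a, b) \<in> Omega n.
            HL (Lsys n a b) = qgen {omega n ^ (2 * a * b)}
          \<and> HL (Lsys n a b) = Cyc n (n div (a * b))
          \<and> card (HL (Lsys n a b)) = n div (a * b)
          \<and> HL (Lsys n a b) \<subseteq> Lsys n a b
          \<and> {x * h | x h. x \<in> Lsys n a b \<and> h \<in> HL (Lsys n a b)} = Lsys n a b
          \<and> (\<forall>k \<in> Dic n. \<forall>h \<in> HL (Lsys n a b). k * h * inverse k \<in> HL (Lsys n a b))
          \<and> canonical (Lsys n a b) (HL (Lsys n a b))
          \<and> base_group (Lsys n a b) = Ggrp (Lsys n a b) (Cyc n (n div (a * b)))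
          \<and> finite (base_group (Lsys n a b))
          \<and> real (card (base_group (Lsys n a b))) = 8 * real n ^ 2 / real (a * b)
          \<and> real (card {g \<in> base_group (Lsys n a b). is_reflection g})
              = 2 * real n / real (a * b) + 2 * real n / real a + 2 * real n / real b - 2)
        \<and> inj_on (\<lambda>(a, b). base_group (Lsys n a b)) (Omega n)"
proof (intro conjI ballI, goal_cases)
  case (1 ab)
  then obtain a b where ab: "ab = (a, b)" "(a, b) \<in> Omega n" by (cases ab) auto
  interpret divisor_pair n a b using Omega_divisor_pair[OF assms ab(2)] .
  have lcm: "lcm a b = a * b" using Omega_lcm[OF ab(2)] .
  have H_qgen: "H = qgen {omega n ^ (2 * a * b)}" using H_eq_qgen by (simp add: lcm mult.assoc)
  have Cyc: "Cyc n (n div (a * b)) = H" using Cyc_eq_H by (simp add: lcm)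
  have card: "card H = n div (a * b)" using card_H by (simp add: lcm)
  have card_refl: "real (card {g \<in> G. is_reflection g})
      = 2 * real n / real (a * b) + 2 * real n / real a + 2 * real n / real b - 2"
    using real_card_reflections by (simp add: lcm)
  show ?case
    unfolding ab(1) prod.case Lsys_eq_refl_set HL_refl_set base_group_refl_set Cyc
    by (intro conjI ballI refl conj_in_H)
      (fact H_qgen card H_subset_refl_set refl_set_mult_H canonical_refl_set Ggrp_refl_set[symmetric]
        finite_monomial_group real_card_monomial_group card_refl | assumption)+
next
  case 2
  show ?case
  proof (rule inj_onI, clarify)
    fix a b a' b' assume "(a, b) \<in> Omega n" "(a', b') \<in> Omega n"
      and eq: "base_group (Lsys n a b) = base_group (Lsys n a' b')"
    then have "divisor_pair n a b" "divisor_pair n a' b'"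
      by (simp_all add: Omega_divisor_pair[OF assms])
    with eq show "a = a' \<and> b = b'"
      by (simp add: divisor_pair.Lsys_eq_refl_set divisor_pair.base_group_refl_set
          monomial_group_eq_imp_eq)
  qed
qed

end
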